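(* Let $A$ be an implementable allocation rule with interim allocations $x_i$ and interim payments $z_i$. Then for every bidder $i$, the function $b_i^{\mathrm{WPB}}(v_i) := z_i(v_i)/x_i(v_i)$ is monotone non-decreasing on the set $\{v_i \in \mathcal V_i : x_i(v_i) > 0\}$.
   Context: Setting: $n$ risk-neutral unit-demand bidders and $k$ identical items, $1 \le k < n$. Bidder $i$ has private value $v_i \in \mathcal V_i = [0,\bar v_i]$, drawn independently across bidders from a distribution $F_i$ with density $f_i > 0$ on $\mathcal V_i$; $\bm v = (v_1,\dots,v_n)$, $\mathcal V = \prod_i \mathcal V_i$. An allocation rule is a measurable map $A : \mathcal V \to \{0,1\}^n$ with $\sum_i A_i(\bm v) \le k$. Its interim allocation is $x_i(v_i) = \mathbb E[A_i(\bm v) \mid v_i]$, and $A$ is called implementable if every $x_i$ is non-decreasing. Its interim payment function is $z_i(v_i) = v_i x_i(v_i) - \int_0^{v_i} x_i(u)\,du$. *)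

theory Defs
  imports "HOL-Probability.Probability"
begin

text \<open>A valuation profile is a function nat => real,
  extensional outside 0..<n. Bidder i's value space is [0, vbar i], its distribution
  has density f i with respect to Lebesgue measure on that interval.\<close>

definition valspace :: "real \<Rightarrow> real measure" where
  "valspace vb = restrict_space lborel {0..vb}"

definition valdist :: "real \<Rightarrow> (real \<Rightarrow> real) \<Rightarrow> real measure" where
  "valdist vb f = density (valspace vb) (\<lambda>v. ennreal (f v))"

definition allocation_rule ::
  "nat \<Rightarrow> nat \<Rightarrow> (nat \<Rightarrow> real) \<Rightarrow> ((nat \<Rightarrow> real) \<Rightarrow> nat \<Rightarrow> real) \<Rightarrow> bool" where
  "allocation_rule n k vbar A \<longleftrightarrow>
     (\<forall>i<n. (\<lambda>v. A v i) \<in> borel_measurable (PiM {0..<n} (\<lambda>j. valspace (vbar j)))) \<and>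
     (\<forall>v \<in> PiE {0..<n} (\<lambda>j. {0..vbar j}).
        (\<forall>i<n. A v i \<in> {0, 1}) \<and> (\<Sum>i<n. A v i) \<le> real k)"

text \<open>Interim allocation x_i(v_i) = E[A_i(v) | v_i]; by independence this is the
  integral over the other bidders' values w.r.t. the product of their distributions.\<close>
definition interim_alloc ::
  "nat \<Rightarrow> (nat \<Rightarrow> real) \<Rightarrow> (nat \<Rightarrow> real \<Rightarrow> real) \<Rightarrow> ((nat \<Rightarrow> real) \<Rightarrow> nat \<Rightarrow> real)
   \<Rightarrow> nat \<Rightarrow> real \<Rightarrow> real" where
  "interim_alloc n vbar f A i vi =
     (\<integral>w. A (w(i := vi)) i \<partial>(PiM ({0..<n} - {i}) (\<lambda>j. valdist (vbar j) (f j))))"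

definition implementable ::
  "nat \<Rightarrow> (nat \<Rightarrow> real) \<Rightarrow> (nat \<Rightarrow> real \<Rightarrow> real) \<Rightarrow> ((nat \<Rightarrow> real) \<Rightarrow> nat \<Rightarrow> real) \<Rightarrow> bool" where
  "implementable n vbar f A \<longleftrightarrow>
     (\<forall>i<n. mono_on {0..vbar i} (interim_alloc n vbar f A i))"

definition interim_pay ::
  "nat \<Rightarrow> (nat \<Rightarrow> real) \<Rightarrow> (nat \<Rightarrow> real \<Rightarrow> real) \<Rightarrow> ((nat \<Rightarrow> real) \<Rightarrow> nat \<Rightarrow> real)
   \<Rightarrow> nat \<Rightarrow> real \<Rightarrow> real" where
  "interim_pay n vbar f A i vi =
     vi * interim_alloc n vbar f A i vi - integral {0..vi} (interim_alloc n vbar f A i)"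

end

theory Submission
  imports Defs
begin

text \<open>Write \<open>z(v)/x(v) = v - (\<integral>\<^sub>0\<^sup>v x)/x(v)\<close>. For \<open>a \<le> b\<close>, split \<open>\<integral>\<^sub>0\<^sup>b x\<close> at \<open>a\<close>:
  monotonicity bounds \<open>\<integral>\<^sub>a\<^sup>b x\<close> by \<open>(b - a) x(b)\<close>, which the gain \<open>b - a\<close> in the first
  term absorbs, and \<open>\<integral>\<^sub>0\<^sup>a x \<ge> 0\<close> is divided by the larger number \<open>x(b) \<ge> x(a)\<close>.\<close>

lemma mono_on_pay_div_alloc:
  fixes g :: "real \<Rightarrow> real"
  assumes mono: "mono_on {0..V} g" and nonneg: "\<And>u. u \<in> {0..V} \<Longrightarrow> 0 \<le> g u"
  shows "mono_on {x \<in> {0..V}. 0 < g x} (\<lambda>x. (x * g x - integral {0..x} g) / g x)"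
proof (rule mono_onI)
  fix a b assume "a \<in> {x \<in> {0..V}. 0 < g x}" "b \<in> {x \<in> {0..V}. 0 < g x}" and "a \<le> b"
  then have ab: "0 \<le> a" "a \<le> b" "b \<le> V" and ga: "0 < g a" by auto
  have gab: "g a \<le> g b" using mono ab by (auto intro: mono_onD)
  have gb: "0 < g b" using ga gab by linarith
  have int0b: "g integrable_on {0..b}"
    using integrable_on_mono_on[of 0 b g] mono_on_subset[OF mono, of "{0..b}"] ab by auto
  define Ia where "Ia = integral {0..a} g"
  define J where "J = integral {a..b} g"
  have Ib: "integral {0..b} g = Ia + J"
    using Henstock_Kurzweil_Integration.integral_combine[OF ab(1,2) int0b] unfolding Ia_def J_def by simp
  have Ia_nonneg: "0 \<le> Ia" unfolding Ia_def
    by (rule Henstock_Kurzweil_Integration.integral_nonneg[OF integrable_on_subinterval[OF int0b]]) (use nonneg ab in auto)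
  have "J \<le> integral {a..b} (\<lambda>_. g b)" unfolding J_def
    by (rule integral_le[OF integrable_on_subinterval[OF int0b]])
       (use mono ab in \<open>auto intro: mono_onD\<close>)
  then have "J / g b \<le> b - a" using ab gb by (simp add: divide_le_eq mult.commute)
  moreover have "Ia / g b \<le> Ia / g a" using Ia_nonneg ga gab by (simp add: divide_left_mono)
  moreover have "(a * g a - Ia) / g a = a - Ia / g a" using ga by (simp add: field_simps)
  moreover have "(b * g b - (Ia + J)) / g b = b - Ia / g b - J / g b"
    using gb by (simp add: field_simps)
  ultimately show "(a * g a - integral {0..a} g) / g a \<le> (b * g b - integral {0..b} g) / g b"
    unfolding Ib Ia_def[symmetric] by linarith
qed

lemma interim_alloc_nonneg:
  assumes "allocation_rule n k vbar A" and "i < n" and "vi \<in> {0..vbar i}"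
  shows "0 \<le> interim_alloc n vbar f A i vi"
  unfolding interim_alloc_def
proof (rule Bochner_Integration.integral_nonneg)
  fix w assume "w \<in> space (PiM ({0..<n} - {i}) (\<lambda>j. valdist (vbar j) (f j)))"
  then have "w \<in> PiE ({0..<n} - {i}) (\<lambda>j. {0..vbar j})"
    by (simp add: space_PiM valdist_def valspace_def space_restrict_space)
  then have "w(i := vi) \<in> PiE {0..<n} (\<lambda>j. {0..vbar j})"
    using assms(2,3) unfolding PiE_def Pi_def extensional_def by auto
  then have "A (w(i := vi)) i \<in> {0, 1}"
    using assms(1,2) unfolding allocation_rule_def by blast
  then show "0 \<le> A (w(i := vi)) i" by auto
qed

theorem mainTheorem1:
  fixes n k :: nat
    and vbar :: "nat \<Rightarrow> real"
    and f :: "nat \<Rightarrow> real \<Rightarrow> real"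
    and A :: "(nat \<Rightarrow> real) \<Rightarrow> nat \<Rightarrow> real"
  assumes "1 \<le> k" and "k < n"
    and "\<And>i. i < n \<Longrightarrow> vbar i > 0"
    and "\<And>i. i < n \<Longrightarrow> f i \<in> borel_measurable borel"
    and "\<And>i v. i < n \<Longrightarrow> v \<in> {0..vbar i} \<Longrightarrow> f i v > 0"
    and "\<And>i. i < n \<Longrightarrow> prob_space (valdist (vbar i) (f i))"
    and "allocation_rule n k vbar A"
    and "implementable n vbar f A"
  shows "\<forall>i<n. mono_on {vi \<in> {0..vbar i}. interim_alloc n vbar f A i vi > 0}
                 (\<lambda>vi. interim_pay n vbar f A i vi / interim_alloc n vbar f A i vi)"
proof (intro allI impI)
  fix i assume i: "i < n"
  have "mono_on {0..vbar i} (interim_alloc n vbar f A i)"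
    using assms(8) i unfolding implementable_def by blast
  moreover have "\<And>u. u \<in> {0..vbar i} \<Longrightarrow> 0 \<le> interim_alloc n vbar f A i u"
    using interim_alloc_nonneg[OF assms(7) i] by blast
  ultimately show "mono_on {vi \<in> {0..vbar i}. interim_alloc n vbar f A i vi > 0}
                     (\<lambda>vi. interim_pay n vbar f A i vi / interim_alloc n vbar f A i vi)"
    unfolding interim_pay_def by (rule mono_on_pay_div_alloc)
qed

end
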